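(* Let $\Gamma$ be a connected finite simplicial graph with at least three vertices. If $A(\Gamma)$ acts on a tree $T$ such that the stabilizer of every edge is infinite cyclic, then every vertex $v$ of $\Gamma$ of valence greater than one acts elliptically on $T$, i.e. has a fixed point in $T$.
   Context: $A(\Gamma)$ is the right-angled Artin group of $\Gamma$, generated by the vertices of $\Gamma$ with relations that adjacent vertices commute. Actions on trees are simplicial and without inversions. *)

theory Defs
  imports "HOL-Algebra.Algebra"
begin

definition simplicial_graph :: "('v \<Rightarrow> 'v \<Rightarrow> bool) \<Rightarrow> bool" where
  "simplicial_graph E \<longleftrightarrow> (\<forall>u w. E u w \<longrightarrow> E w u) \<and> (\<forall>u. \<not> E u u)"

definition graph_connected :: "('v \<Rightarrow> 'v \<Rightarrow> bool) \<Rightarrow> bool" where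
  "graph_connected E \<longleftrightarrow> (\<forall>u w. E\<^sup>*\<^sup>* u w)"

definition valence :: "('v \<Rightarrow> 'v \<Rightarrow> bool) \<Rightarrow> 'v \<Rightarrow> nat" where
  "valence E v = card {w. E v w}"

text \<open>Words over generators and their inverses: (a, True) is a, (a, False) is a^-1.
  Two words are equivalent if related by free cancellation and by commuting adjacent
  generators (and their inverses) of adjacent vertices.\<close>

inductive raag_rel :: "('v \<Rightarrow> 'v \<Rightarrow> bool) \<Rightarrow> ('v \<times> bool) list \<Rightarrow> ('v \<times> bool) list \<Rightarrow> bool"
  for E where
  refl: "raag_rel E w w"
| cancel: "raag_rel E (xs @ [(a, b), (a, \<not> b)] @ ys) (xs @ ys)"
| comm: "E a c \<Longrightarrow> raag_rel E (xs @ [(a, b), (c, d)] @ ys) (xs @ [(c, d), (a, b)] @ ys)"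
| sym: "raag_rel E u w \<Longrightarrow> raag_rel E w u"
| trans: "raag_rel E u w \<Longrightarrow> raag_rel E w z \<Longrightarrow> raag_rel E u z"

definition raag_class :: "('v \<Rightarrow> 'v \<Rightarrow> bool) \<Rightarrow> ('v \<times> bool) list \<Rightarrow> ('v \<times> bool) list set" where
  "raag_class E w = {u. raag_rel E w u}"

definition raag_mult :: "('v \<Rightarrow> 'v \<Rightarrow> bool) \<Rightarrow> ('v \<times> bool) list set \<Rightarrow> ('v \<times> bool) list set \<Rightarrow> ('v \<times> bool) list set" where
  "raag_mult E A B = raag_class E ((SOME u. u \<in> A) @ (SOME u. u \<in> B))"

definition RAAG :: "('v \<Rightarrow> 'v \<Rightarrow> bool) \<Rightarrow> ('v \<times> bool) list set monoid" where
  "RAAG E = \<lparr> carrier = range (raag_class E), monoid.mult = raag_mult E, one = raag_class E [] \<rparr>"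

definition raag_gen :: "('v \<Rightarrow> 'v \<Rightarrow> bool) \<Rightarrow> 'v \<Rightarrow> ('v \<times> bool) list set" where
  "raag_gen E v = raag_class E [(v, True)]"

definition is_tree :: "'t set \<Rightarrow> ('t \<Rightarrow> 't \<Rightarrow> bool) \<Rightarrow> bool" where
  "is_tree VT ET \<longleftrightarrow>
     VT \<noteq> {} \<and>
     (\<forall>x y. ET x y \<longrightarrow> x \<in> VT \<and> y \<in> VT) \<and>
     (\<forall>x y. ET x y \<longrightarrow> ET y x) \<and> (\<forall>x. \<not> ET x x) \<and>
     (\<forall>x\<in>VT. \<forall>y\<in>VT. ET\<^sup>*\<^sup>* x y) \<and>
     \<not> (\<exists>p. 3 \<le> length p \<and> distinct p \<and> set p \<subseteq> VT \<and>
            (\<forall>i < length p - 1. ET (p ! i) (p ! Suc i)) \<and> ET (last p) (hd p))"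

definition tree_action :: "('g, 'b) monoid_scheme \<Rightarrow> 't set \<Rightarrow> ('t \<Rightarrow> 't \<Rightarrow> bool) \<Rightarrow> ('g \<Rightarrow> 't \<Rightarrow> 't) \<Rightarrow> bool" where
  "tree_action G VT ET \<phi> \<longleftrightarrow>
     group_action G VT \<phi> \<and>
     (\<forall>g\<in>carrier G. \<forall>x y. ET x y \<longrightarrow> ET (\<phi> g x) (\<phi> g y)) \<and>
     (\<forall>g\<in>carrier G. \<forall>x y. ET x y \<longrightarrow> \<not> (\<phi> g x = y \<and> \<phi> g y = x))"

text \<open>Stabilizer of the edge {x,y}; for actions without inversions this is the pointwise one.\<close>

definition edge_stab :: "('g, 'b) monoid_scheme \<Rightarrow> ('g \<Rightarrow> 't \<Rightarrow> 't) \<Rightarrow> 't \<Rightarrow> 't \<Rightarrow> 'g set" where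
  "edge_stab G \<phi> x y = {g \<in> carrier G. {\<phi> g x, \<phi> g y} = {x, y}}"

definition infinite_cyclic :: "('g, 'b) monoid_scheme \<Rightarrow> 'g set \<Rightarrow> bool" where
  "infinite_cyclic G H \<longleftrightarrow>
     (\<exists>g \<in> carrier G. H = {g [^]\<^bsub>G\<^esub> (k::int) | k. True} \<and>
                      (\<forall>k::int. k \<noteq> 0 \<longrightarrow> g [^]\<^bsub>G\<^esub> k \<noteq> \<one>\<^bsub>G\<^esub>))"

definition elliptic :: "'t set \<Rightarrow> ('g \<Rightarrow> 't \<Rightarrow> 't) \<Rightarrow> 'g \<Rightarrow> bool" where
  "elliptic VT \<phi> g \<longleftrightarrow> (\<exists>x\<in>VT. \<phi> g x = x)"

end

theory Submission
  imports Defs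
begin

text \<open>Suppose the generator v has no fixed point. Then it has an axis: a bi-infinite reduced
  line on which v acts as a shift by its minimal displacement n > 0, and every vertex off the
  axis is displaced by more than n. An element h commuting with v preserves displacements, hence
  maps the axis to itself, where it must act as a translation by some t; so h^n v^-t fixes the
  axis pointwise. Two distinct neighbours a, b of v commute with v, so a^n v^-s and b^n v^-t
  both lie in the cyclic stabiliser of an edge of the axis: a^n v^-s = c^i and b^n v^-t = c^j.
  The exponent sums e_a, e_b are homomorphisms to the integers, and applying them gives
  i e_a(c) = n, i e_b(c) = 0 and j e_b(c) = n, which is impossible.\<close>

section \<open>Reduced walks in a simplicial tree\<close>

locale simplicial_tree =
  fixes VT :: "'t set" and ET :: "'t \<Rightarrow> 't \<Rightarrow> bool"
  assumes tree: "is_tree VT ET"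
begin

definition walk :: "(nat \<Rightarrow> 't) \<Rightarrow> nat \<Rightarrow> bool" where
  "walk w n \<longleftrightarrow> (\<forall>i<n. ET (w i) (w (Suc i)))"

definition reduced_walk :: "(nat \<Rightarrow> 't) \<Rightarrow> nat \<Rightarrow> bool" where
  "reduced_walk w n \<longleftrightarrow> walk w n \<and> (\<forall>i. i + 2 \<le> n \<longrightarrow> w i \<noteq> w (i + 2))"

definition distance :: "'t \<Rightarrow> 't \<Rightarrow> nat" where
  "distance x y = (LEAST n. \<exists>w. walk w n \<and> w 0 = x \<and> w n = y)"

definition walk_append :: "(nat \<Rightarrow> 't) \<Rightarrow> nat \<Rightarrow> (nat \<Rightarrow> 't) \<Rightarrow> nat \<Rightarrow> 't" where
  "walk_append w n w' i = (if i \<le> n then w i else w' (i - n))"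

lemma vertices_nonempty: "VT \<noteq> {}"
  using tree unfolding is_tree_def by simp

lemma adj_vertices: "ET x y \<Longrightarrow> x \<in> VT \<and> y \<in> VT"
  using tree unfolding is_tree_def by blast

lemma adj_sym: "ET x y \<Longrightarrow> ET y x"
  using tree unfolding is_tree_def by blast

lemma adj_irrefl: "\<not> ET x x"
  using tree unfolding is_tree_def by blast

lemma walk_vertex: "walk w n \<Longrightarrow> i \<le> n \<Longrightarrow> 0 < n \<Longrightarrow> w i \<in> VT"
  unfolding walk_def by (metis Suc_pred adj_vertices le_neq_implies_less lessI)

lemma walk_shift: "walk w n \<Longrightarrow> i + k \<le> n \<Longrightarrow> walk (\<lambda>l. w (i + l)) k"
  unfolding walk_def by simp

lemma reduced_walk_shift:
  "reduced_walk w n \<Longrightarrow> i + k \<le> n \<Longrightarrow> reduced_walk (\<lambda>l. w (i + l)) k"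
  unfolding reduced_walk_def walk_def by (simp add: add.assoc)

lemma reduced_walk_rev:
  assumes "reduced_walk w n"
  shows "reduced_walk (\<lambda>i. w (n - i)) n"
  unfolding reduced_walk_def walk_def
proof (intro conjI allI impI)
  fix i assume "i < n"
  then have "ET (w (n - Suc i)) (w (Suc (n - Suc i)))" "Suc (n - Suc i) = n - i"
    using assms unfolding reduced_walk_def walk_def by auto
  then show "ET (w (n - i)) (w (n - Suc i))"
    using adj_sym by simp
next
  fix i assume "i + 2 \<le> n"
  then have "w (n - (i + 2)) \<noteq> w (n - (i + 2) + 2)" "n - (i + 2) + 2 = n - i"
    using assms unfolding reduced_walk_def by auto
  then show "w (n - i) \<noteq> w (n - (i + 2))"
    by simp
qed

lemma closed_walk_not_inj:
  assumes w: "walk w n" and "3 \<le> n" and closed: "w n = w 0"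
  shows "\<not> inj_on w {..<n}"
proof
  assume inj: "inj_on w {..<n}"
  define p where "p = map w [0..<n]"
  have "distinct p"
    using inj by (simp add: p_def distinct_map lessThan_atLeast0)
  moreover have "set p \<subseteq> VT"
    using walk_vertex[OF w] \<open>3 \<le> n\<close> by (auto simp: p_def)
  moreover have "\<forall>i < length p - 1. ET (p ! i) (p ! Suc i)"
    using w by (simp add: p_def walk_def)
  moreover have "ET (last p) (hd p)"
  proof -
    have "n - 1 < n"
      using \<open>3 \<le> n\<close> by simp
    then have "ET (w (n - 1)) (w (Suc (n - 1)))"
      using w unfolding walk_def by blast
    then show ?thesis
      using \<open>3 \<le> n\<close> closed by (simp add: p_def last_map hd_map)
  qed
  moreover have "3 \<le> length p"
    using \<open>3 \<le> n\<close> by (simp add: p_def)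
  ultimately show False
    using tree unfolding is_tree_def by blast
qed

lemma reduced_walk_inj:
  assumes "reduced_walk w n" "i < j" "j \<le> n"
  shows "w i \<noteq> w j"
  using assms
proof (induction "j - i" arbitrary: i j rule: less_induct)
  case less
  have walk: "walk (\<lambda>l. w (i + l)) (j - i)"
    using less.prems walk_shift[of w n i "j - i"] unfolding reduced_walk_def by simp
  consider "j = Suc i" | "j = i + 2" | "3 \<le> j - i"
    using \<open>i < j\<close> by linarith
  then show ?case
  proof cases
    case 1
    then show ?thesis using walk adj_irrefl unfolding walk_def by fastforce
  next
    case 2
    then show ?thesis using less.prems unfolding reduced_walk_def by blast
  next
    case 3
    have distinct: "w (i + a) \<noteq> w (i + b)" if "a < b" "b < j - i" for a b
    proof -
      have "(i + b) - (i + a) < j - i" "i + a < i + b" "i + b \<le> n"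
        using that less.prems by auto
      then show ?thesis
        using less.hyps less.prems(1) by blast
    qed
    have "inj_on (\<lambda>l. w (i + l)) {..<j - i}"
      by (rule inj_onI) (metis distinct lessThan_iff linorder_neqE_nat)
    then show ?thesis
      using closed_walk_not_inj[OF walk 3] \<open>i < j\<close> by auto
  qed
qed

lemma reduced_walk_append:
  assumes w: "reduced_walk w n" and w': "reduced_walk w' n'" and joint: "w n = w' 0"
    and no_backtrack: "0 < n \<Longrightarrow> 0 < n' \<Longrightarrow> w (n - 1) \<noteq> w' 1"
  shows "reduced_walk (walk_append w n w') (n + n')"
  unfolding reduced_walk_def walk_def
proof (intro conjI allI impI)
  fix i assume "i < n + n'"
  then show "ET (walk_append w n w' i) (walk_append w n w' (Suc i))"
    using w w' joint unfolding reduced_walk_def walk_def walk_append_def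
    by (cases "i < n") (auto simp: Suc_diff_le)
next
  fix i assume i: "i + 2 \<le> n + n'"
  consider "i + 2 \<le> n" | "i + 1 = n" | "n \<le> i"
    by linarith
  then show "walk_append w n w' i \<noteq> walk_append w n w' (i + 2)"
  proof cases
    case 1
    then show ?thesis using w unfolding reduced_walk_def walk_append_def by simp
  next
    case 2
    then have "walk_append w n w' i = w (n - 1)" "walk_append w n w' (i + 2) = w' 1"
      by (auto simp: walk_append_def)
    then show ?thesis using no_backtrack 2 i by simp
  next
    case 3
    then have "walk_append w n w' i = w' (i - n)" "walk_append w n w' (i + 2) = w' (i - n + 2)"
      using joint by (auto simp: walk_append_def Suc_diff_le)
    then show ?thesis using w' i 3 unfolding reduced_walk_def by simp
  qed
qed

lemma reduced_walk_length_unique: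
  "reduced_walk w n \<Longrightarrow> reduced_walk w' n' \<Longrightarrow> w 0 = w' 0 \<Longrightarrow> w n = w' n' \<Longrightarrow> n = n'"
proof (induction n arbitrary: w w' n')
  case 0
  then show ?case using reduced_walk_inj[of w' n' 0 n'] by (cases n') auto
next
  case (Suc n)
  obtain k where k: "n' = Suc k"
    using Suc.prems reduced_walk_inj[of w "Suc n" 0 "Suc n"] by (cases n') auto
  show ?case
  proof (cases "w 1 = w' 1")
    case True
    then show ?thesis
      using Suc.IH[OF reduced_walk_shift[OF Suc.prems(1), of 1] reduced_walk_shift[OF Suc.prems(2),
          of 1 k]] Suc.prems k by simp
  next
    case False
    let ?u = "walk_append (\<lambda>i. w' (n' - i)) n' w"
    have "reduced_walk ?u (n' + Suc n)"
      using reduced_walk_append[OF reduced_walk_rev[OF Suc.prems(2)] Suc.prems(1)] Suc.prems(3)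
        False k by simp
    moreover have "?u 0 = ?u (n' + Suc n)"
      using Suc.prems by (simp add: walk_append_def)
    ultimately show ?thesis
      using reduced_walk_inj[of ?u "n' + Suc n" 0 "n' + Suc n"] by simp
  qed
qed

lemma walk_exists:
  assumes "x \<in> VT" "y \<in> VT"
  shows "\<exists>n w. walk w n \<and> w 0 = x \<and> w n = y"
proof -
  have "ET\<^sup>*\<^sup>* x y" using tree assms unfolding is_tree_def by blast
  then show ?thesis
  proof (induction rule: rtranclp_induct)
    case base
    show ?case by (rule exI[of _ 0], rule exI[of _ "\<lambda>_. x"]) (simp add: walk_def)
  next
    case (step y z)
    then obtain w n where w: "walk w n" "w 0 = x" "w n = y" by blast
    have "walk (w(Suc n := z)) (Suc n)"
      using w step.hyps(2) unfolding walk_def by (auto simp: less_Suc_eq)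
    moreover have "(w(Suc n := z)) 0 = x" "(w(Suc n := z)) (Suc n) = z"
      using w by auto
    ultimately show ?case by blast
  qed
qed

lemma walk_remove_backtrack:
  assumes w: "walk w n" and i: "i + 2 \<le> n" and backtrack: "w i = w (i + 2)"
  shows "\<exists>w'. walk w' (n - 2) \<and> w' 0 = w 0 \<and> w' (n - 2) = w n"
proof (intro exI conjI)
  let ?w = "\<lambda>k. if k \<le> i then w k else w (k + 2)"
  show "walk ?w (n - 2)"
    unfolding walk_def
  proof (intro allI impI)
    fix k assume "k < n - 2"
    then show "ET (?w k) (?w (Suc k))"
      using w backtrack unfolding walk_def by (cases "k < i"; cases "k = i") auto
  qed
  show "?w 0 = w 0"
    using backtrack by simp
  have "n = i + 2 \<or> (\<not> n - 2 \<le> i \<and> n - 2 + 2 = n)"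
    using i by linarith
  then show "?w (n - 2) = w n"
    using backtrack by auto
qed

lemma shortest_walk_reduced:
  assumes "x \<in> VT" "y \<in> VT"
  obtains w where "reduced_walk w (distance x y)" "w 0 = x" "w (distance x y) = y"
proof -
  let ?walk = "\<lambda>n. \<exists>w. walk w n \<and> w 0 = x \<and> w n = y"
  have "?walk (distance x y)"
    unfolding distance_def by (rule LeastI_ex) (rule walk_exists[OF assms])
  then obtain w where w: "walk w (distance x y)" "w 0 = x" "w (distance x y) = y" by blast
  have "w i \<noteq> w (i + 2)" if i: "i + 2 \<le> distance x y" for i
  proof
    assume "w i = w (i + 2)"
    from walk_remove_backtrack[OF w(1) i this] have "?walk (distance x y - 2)"
      unfolding w(2,3) .
    then have "distance x y \<le> distance x y - 2"
      unfolding distance_def by (rule Least_le)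
    then show False using i by linarith
  qed
  then show ?thesis using that w unfolding reduced_walk_def by blast
qed

lemma distance_reduced_walk:
  assumes "reduced_walk w n" "w 0 \<in> VT"
  shows "distance (w 0) (w n) = n"
proof -
  have "w n \<in> VT"
    using assms walk_vertex[of w n n] unfolding reduced_walk_def by (cases "n = 0") auto
  then obtain u where
    "reduced_walk u (distance (w 0) (w n))" "u 0 = w 0" "u (distance (w 0) (w n)) = w n"
    using shortest_walk_reduced assms(2) by blast
  then show ?thesis using reduced_walk_length_unique assms(1) by metis
qed

end

locale tree_group_action = simplicial_tree VT ET for VT :: "'t set" and ET +
  fixes G :: "('g, 'b) monoid_scheme" (structure) and \<phi> :: "'g \<Rightarrow> 't \<Rightarrow> 't"
  assumes action: "tree_action G VT ET \<phi>"
begin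

lemma group_action: "group_action G VT \<phi>"
  using action unfolding tree_action_def by blast

lemma group: "group G"
  using group_action unfolding group_action_def group_hom_def by blast

lemma act_vertex: "h \<in> carrier G \<Longrightarrow> x \<in> VT \<Longrightarrow> \<phi> h x \<in> VT"
  using group_action.element_image[OF group_action] by blast

lemma act_adj: "h \<in> carrier G \<Longrightarrow> ET x y \<Longrightarrow> ET (\<phi> h x) (\<phi> h y)"
  using action unfolding tree_action_def by blast

lemma act_no_inversion: "h \<in> carrier G \<Longrightarrow> ET x y \<Longrightarrow> \<not> (\<phi> h x = y \<and> \<phi> h y = x)"
  using action unfolding tree_action_def by blast

lemma act_inj: "h \<in> carrier G \<Longrightarrow> x \<in> VT \<Longrightarrow> y \<in> VT \<Longrightarrow> \<phi> h x = \<phi> h y \<Longrightarrow> x = y"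
  using group_action.inj_prop[OF group_action] by (meson inj_on_eq_iff)

lemma act_mult:
  "h \<in> carrier G \<Longrightarrow> k \<in> carrier G \<Longrightarrow> x \<in> VT \<Longrightarrow> \<phi> (h \<otimes> k) x = \<phi> h (\<phi> k x)"
  using group_action.composition_rule[OF group_action] by blast

lemma act_one: "x \<in> VT \<Longrightarrow> \<phi> \<one> x = x"
  using group_action.id_eq_one[OF group_action] by (metis restrict_apply')

lemma reduced_walk_act:
  assumes h: "h \<in> carrier G" and w: "reduced_walk w n" "w 0 \<in> VT"
  shows "reduced_walk (\<lambda>i. \<phi> h (w i)) n"
  unfolding reduced_walk_def walk_def
proof (intro conjI allI impI)
  fix i assume "i < n"
  then show "ET (\<phi> h (w i)) (\<phi> h (w (Suc i)))"
    using w act_adj[OF h] unfolding reduced_walk_def walk_def by blast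
next
  fix i assume i: "i + 2 \<le> n"
  then have "w i \<noteq> w (i + 2)" "w i \<in> VT" "w (i + 2) \<in> VT"
    using w walk_vertex[of w n] unfolding reduced_walk_def by auto
  then show "\<phi> h (w i) \<noteq> \<phi> h (w (i + 2))"
    using act_inj[OF h] by blast
qed

lemma distance_act:
  assumes "h \<in> carrier G" "x \<in> VT" "y \<in> VT"
  shows "distance (\<phi> h x) (\<phi> h y) = distance x y"
proof -
  obtain w where w: "reduced_walk w (distance x y)" "w 0 = x" "w (distance x y) = y"
    using shortest_walk_reduced assms(2,3) by blast
  then show ?thesis
    using distance_reduced_walk[OF reduced_walk_act[OF assms(1) w(1)]] act_vertex assms by simp
qed

end

section \<open>The axis of a hyperbolic element\<close>

lemma unit_step_int_map_is_shift:
  fixes s :: "int \<Rightarrow> int" and n :: int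
  assumes step: "\<And>k. \<bar>s (k + 1) - s k\<bar> = 1" and no_return: "\<And>k. s (k + 2) \<noteq> s k"
    and period: "s n = s 0 + n" and "n \<noteq> 0"
  shows "s k = s 0 + k"
proof -
  define e where "e = s 1 - s 0"
  have same_step: "s (k + 1 + 1) - s (k + 1) = s (k + 1) - s k" for k
  proof -
    have "s (k + 1 + 1) \<noteq> s k" using no_return[of k] by (simp add: add.assoc)
    then show ?thesis using step[of k] step[of "k + 1"] by arith
  qed
  have const: "s (k + 1) - s k = e" for k
  proof (induction k rule: int_induct[of _ 0])
    case base then show ?case by (simp add: e_def)
  next
    case (step1 i) then show ?case using same_step[of i] by simp
  next
    case (step2 i) then show ?case using same_step[of "i - 1"] by simp
  qed
  have linear: "s k = s 0 + e * k" for k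
  proof (induction k rule: int_induct[of _ 0])
    case (step1 i) then show ?case using const[of i] by (simp add: algebra_simps)
  next
    case (step2 i) then show ?case using const[of "i - 1"] by (simp add: algebra_simps)
  qed simp
  have "e * n = n" using linear[of n] period by simp
  then have "e = 1" using \<open>n \<noteq> 0\<close> by simp
  then show ?thesis using linear[of k] by simp
qed

locale hyperbolic_element = tree_group_action VT ET G \<phi>
  for VT :: "'t set" and ET and G :: "('g, 'b) monoid_scheme" (structure) and \<phi> +
  fixes g assumes g_carrier: "g \<in> carrier G" and no_fixed_point: "\<forall>x\<in>VT. \<phi> g x \<noteq> x"
begin

definition displacement :: "'t \<Rightarrow> nat" where
  "displacement x = distance x (\<phi> g x)"

definition translation_length :: nat where
  "translation_length = (LEAST n. \<exists>x\<in>VT. displacement x = n)"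

lemma translation_length_attained: "\<exists>x\<in>VT. displacement x = translation_length"
proof -
  obtain x where "x \<in> VT" using vertices_nonempty by blast
  then have "\<exists>n. \<exists>x\<in>VT. displacement x = n" by blast
  then show ?thesis unfolding translation_length_def by (rule LeastI_ex)
qed

lemma translation_length_le: "x \<in> VT \<Longrightarrow> translation_length \<le> displacement x"
  unfolding translation_length_def by (rule Least_le) blast

definition base_vertex :: 't where
  "base_vertex = (SOME x. x \<in> VT \<and> displacement x = translation_length)"

definition base_path :: "nat \<Rightarrow> 't" where
  "base_path = (SOME w. reduced_walk w translation_length \<and> w 0 = base_vertex
     \<and> w translation_length = \<phi> g base_vertex)"

lemma base_vertex: "base_vertex \<in> VT" "displacement base_vertex = translation_length"
  using someI_ex[OF translation_length_attained[unfolded Bex_def]] unfolding base_vertex_def by auto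

lemma base_path:
  "reduced_walk base_path translation_length" "base_path 0 = base_vertex"
  "base_path translation_length = \<phi> g base_vertex"
proof -
  obtain w where "reduced_walk w (displacement base_vertex)" "w 0 = base_vertex"
      "w (displacement base_vertex) = \<phi> g base_vertex"
    using shortest_walk_reduced[OF base_vertex(1) act_vertex[OF g_carrier base_vertex(1)]]
    unfolding displacement_def by blast
  then have "\<exists>w. reduced_walk w translation_length \<and> w 0 = base_vertex
      \<and> w translation_length = \<phi> g base_vertex"
    unfolding base_vertex(2) by blast
  then have "reduced_walk base_path translation_length \<and> base_path 0 = base_vertex
      \<and> base_path translation_length = \<phi> g base_vertex"
    unfolding base_path_def by (rule someI_ex)
  then show "reduced_walk base_path translation_length" "base_path 0 = base_vertex"
    "base_path translation_length = \<phi> g base_vertex"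
    by auto
qed

lemma translation_length_pos: "0 < translation_length"
proof (rule ccontr)
  assume "\<not> 0 < translation_length"
  then have "base_vertex = \<phi> g base_vertex" using base_path by simp
  then show False using no_fixed_point base_vertex by metis
qed

lemma base_path_vertex: "i \<le> translation_length \<Longrightarrow> base_path i \<in> VT"
  using walk_vertex base_path translation_length_pos unfolding reduced_walk_def by blast

text \<open>The minimal displacement forbids backtracking at the junction of the base path and its
  g-translate; otherwise base_path 1 would be displaced by translation_length - 2.\<close>

lemma base_path_no_backtrack: "base_path (translation_length - 1) \<noteq> \<phi> g (base_path 1)"
proof
  assume eq: "base_path (translation_length - 1) = \<phi> g (base_path 1)"
  show False
  proof (cases "translation_length = 1")
    case True
    then have "ET (base_path 0) (base_path 1)"
      using base_path unfolding reduced_walk_def walk_def by simp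
    moreover have "\<phi> g (base_path 0) = base_path 1" "\<phi> g (base_path 1) = base_path 0"
      using eq base_path True by simp_all
    ultimately show False
      using act_no_inversion[OF g_carrier] by blast
  next
    case False
    let ?n = translation_length
    have n: "2 \<le> ?n" "1 + (?n - 2) = ?n - 1"
      using False translation_length_pos by auto
    then have "reduced_walk (\<lambda>l. base_path (1 + l)) (?n - 2)"
      using reduced_walk_shift[OF base_path(1), of 1 "?n - 2"] by simp
    from distance_reduced_walk[OF this] have "distance (base_path 1) (base_path (?n - 1)) = ?n - 2"
      using base_path_vertex n by simp
    then have "displacement (base_path 1) = ?n - 2"
      unfolding displacement_def eq .
    then show False
      using translation_length_le[OF base_path_vertex, of 1] n by linarith
  qed
qed

lemma g_pow_carrier: "g [^] (q::int) \<in> carrier G"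
  using group.int_pow_closed[OF group g_carrier] .

lemma g_pow_plus_one: "g [^] (q + 1::int) = g [^] q \<otimes> g" "g [^] (q + 1::int) = g \<otimes> g [^] q"
  using group.int_pow_mult[OF group g_carrier, of q 1]
    group.int_pow_mult[OF group g_carrier, of 1 q]
  by (simp_all add: group.int_pow_1[OF group g_carrier] add.commute)

text \<open>The axis of g: the base path and all its translates by powers of g, concatenated.\<close>

definition axis :: "int \<Rightarrow> 't" where
  "axis k = \<phi> (g [^] (k div int translation_length))
    (base_path (nat (k mod int translation_length)))"

lemma axis_eq:
  assumes "r \<le> translation_length"
  shows "axis (q * int translation_length + int r) = \<phi> (g [^] q) (base_path r)"
proof (cases "r < translation_length")
  case True
  then show ?thesis unfolding axis_def by simp
next
  case False
  then have r: "r = translation_length" using assms by simp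
  then have "axis (q * int translation_length + int r) = \<phi> (g [^] (q + 1)) (base_path 0)"
    using translation_length_pos unfolding axis_def by (simp add: distrib_right[symmetric])
  also have "\<dots> = \<phi> (g [^] q) (\<phi> g (base_path 0))"
    using g_pow_plus_one(1) act_mult g_pow_carrier g_carrier base_path_vertex by simp
  finally show ?thesis using base_path r by simp
qed

lemma axis_index_split:
  obtains q r where "k = q * int translation_length + int r" "r < translation_length"
proof
  show "k = k div int translation_length * int translation_length
      + int (nat (k mod int translation_length))"
    using translation_length_pos by simp
  show "nat (k mod int translation_length) < translation_length"
    using translation_length_pos by (simp add: nat_less_iff)
qed

lemma axis_vertex: "axis k \<in> VT"
proof -
  obtain q r where "k = q * int translation_length + int r" "r < translation_length"
    by (rule axis_index_split)
  then show ?thesis using axis_eq[of r q] act_vertex g_pow_carrier base_path_vertex by simp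
qed

lemma axis_shift: "axis (k + int translation_length) = \<phi> g (axis k)"
proof -
  obtain q r where k: "k = q * int translation_length + int r" "r < translation_length"
    by (rule axis_index_split)
  then have "k + int translation_length = (q + 1) * int translation_length + int r"
    by (simp add: algebra_simps)
  then have "axis (k + int translation_length) = \<phi> (g [^] (q + 1)) (base_path r)"
    using axis_eq[of r "q + 1"] k(2) by simp
  also have "\<dots> = \<phi> g (\<phi> (g [^] q) (base_path r))"
    using g_pow_plus_one(2) act_mult g_pow_carrier g_carrier base_path_vertex k by simp
  finally show ?thesis using axis_eq[of r q] k by simp
qed

lemma axis_adj: "ET (axis k) (axis (k + 1))"
proof -
  obtain q r where k: "k = q * int translation_length + int r" "r < translation_length"
    by (rule axis_index_split)
  have "ET (base_path r) (base_path (Suc r))"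
    using base_path k unfolding reduced_walk_def walk_def by blast
  then have "ET (\<phi> (g [^] q) (base_path r)) (\<phi> (g [^] q) (base_path (Suc r)))"
    using act_adj g_pow_carrier by blast
  moreover have "k + 1 = q * int translation_length + int (Suc r)" using k by simp
  ultimately show ?thesis using axis_eq k by (metis Suc_leI less_imp_le_nat)
qed

lemma axis_no_backtrack: "axis k \<noteq> axis (k + 2)"
proof -
  obtain q r where k: "k = q * int translation_length + int r" "r < translation_length"
    by (rule axis_index_split)
  show ?thesis
  proof (cases "r + 2 \<le> translation_length")
    case True
    then have "base_path r \<noteq> base_path (r + 2)" "base_path r \<in> VT" "base_path (r + 2) \<in> VT"
      using base_path base_path_vertex unfolding reduced_walk_def by auto
    then have "\<phi> (g [^] q) (base_path r) \<noteq> \<phi> (g [^] q) (base_path (r + 2))"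
      using act_inj g_pow_carrier by blast
    moreover have "k + 2 = q * int translation_length + int (r + 2)" using k by simp
    ultimately show ?thesis using axis_eq[of r q] axis_eq[of "r + 2" q] k True
      by (simp add: ac_simps)
  next
    case False
    then have r: "r = translation_length - 1" using k by linarith
    then have k2: "k + 2 = (q + 1) * int translation_length + int 1"
      using k translation_length_pos by (simp add: algebra_simps of_nat_diff)
    have "axis (k + 2) = \<phi> (g [^] (q + 1)) (base_path 1)"
      unfolding k2 using axis_eq[of 1 "q + 1"] translation_length_pos by simp
    also have "\<dots> = \<phi> (g [^] q) (\<phi> g (base_path 1))"
      using g_pow_plus_one(1) act_mult g_pow_carrier g_carrier base_path_vertex
        translation_length_pos by simp
    finally have "axis (k + 2) = \<phi> (g [^] q) (\<phi> g (base_path 1))" .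
    moreover have "axis k = \<phi> (g [^] q) (base_path (translation_length - 1))"
      using axis_eq[of r q] k r by simp
    moreover have "base_path (translation_length - 1) \<in> VT" "\<phi> g (base_path 1) \<in> VT"
      using base_path_vertex act_vertex g_carrier translation_length_pos by auto
    ultimately show ?thesis
      using base_path_no_backtrack act_inj g_pow_carrier by metis
  qed
qed

lemma reduced_walk_axis: "reduced_walk (\<lambda>i. axis (a + int i)) n"
  unfolding reduced_walk_def walk_def
proof (intro conjI allI impI)
  fix i
  show "ET (axis (a + int i)) (axis (a + int (Suc i)))"
    using axis_adj[of "a + int i"] by (simp add: ac_simps)
  show "axis (a + int i) \<noteq> axis (a + int (i + 2))"
    using axis_no_backtrack[of "a + int i"] by (simp add: ac_simps)
qed

lemma axis_inj: "axis i = axis j \<Longrightarrow> i = j"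
proof (rule ccontr)
  have "axis a \<noteq> axis b" if "a < b" for a b
    using reduced_walk_inj[OF reduced_walk_axis[of a "nat (b - a)"], of 0 "nat (b - a)"] that
    by simp
  then show "axis i = axis j \<Longrightarrow> i \<noteq> j \<Longrightarrow> False"
    by (metis linorder_neqE)
qed

lemma distance_axis: "distance (axis a) (axis (a + int n)) = n"
  using distance_reduced_walk[OF reduced_walk_axis[of a n]] axis_vertex by simp

lemma displacement_axis: "displacement (axis k) = translation_length"
  using axis_shift[of k, symmetric] distance_axis[of k translation_length]
  unfolding displacement_def by simp

lemma axis_adj_index: "ET (axis i) (axis j) \<Longrightarrow> \<bar>i - j\<bar> = 1"
proof -
  have "\<bar>a - b\<bar> = 1" if "a \<le> b" "ET (axis a) (axis b)" for a b
  proof -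
    have "reduced_walk (\<lambda>k. if k = 0 then axis a else axis b) 1"
      using that unfolding reduced_walk_def walk_def by auto
    from distance_reduced_walk[OF this] have "distance (axis a) (axis b) = 1"
      using axis_vertex by simp
    moreover have "distance (axis a) (axis b) = nat (b - a)"
      using distance_axis[of a "nat (b - a)"] that(1) by simp
    ultimately show ?thesis using that(1) by simp
  qed
  then show "ET (axis i) (axis j) \<Longrightarrow> \<bar>i - j\<bar> = 1"
    by (metis adj_sym abs_minus_commute linorder_le_cases)
qed

lemma axis_preimage: "z \<in> VT \<Longrightarrow> \<phi> g z = axis k \<Longrightarrow> z = axis (k - int translation_length)"
  using axis_shift[of "k - int translation_length"] act_inj[OF g_carrier] axis_vertex by simp

lemma path_to_axis:
  assumes y: "y \<in> VT" and off: "y \<notin> range axis"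
  obtains w j k where "reduced_walk w j" "w 0 = y" "w j = axis k" "0 < j"
    "\<And>i. i < j \<Longrightarrow> w i \<notin> range axis"
proof -
  obtain w where
    w: "reduced_walk w (distance y (axis 0))" "w 0 = y" "w (distance y (axis 0)) = axis 0"
    using shortest_walk_reduced[OF y axis_vertex] by blast
  define j where "j = (LEAST j. w j \<in> range axis)"
  have "w (distance y (axis 0)) \<in> range axis" using w(3) by simp
  then have hit: "w j \<in> range axis" and "j \<le> distance y (axis 0)"
    unfolding j_def by (auto intro: LeastI Least_le)
  then have "reduced_walk w j"
    using reduced_walk_shift[OF w(1), of 0 j] by simp
  moreover have "0 < j" using hit w(2) off by (metis gr0I)
  moreover have "w i \<notin> range axis" if "i < j" for i
    using that not_less_Least unfolding j_def by blast
  ultimately show ?thesis using that hit w(2) by blast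
qed

text \<open>Going from y to the axis, along the axis for one period, and back by the g-translate of
  the first path is a reduced walk from y to g y; hence a vertex off the axis is displaced by
  strictly more than the translation length.\<close>

lemma displacement_off_axis:
  assumes y: "y \<in> VT" and off: "y \<notin> range axis"
  shows "translation_length < displacement y"
proof -
  obtain w j k where w: "reduced_walk w j" "w 0 = y" "w j = axis k" "0 < j"
    and before: "\<And>i. i < j \<Longrightarrow> w i \<notin> range axis"
    using path_to_axis[OF y off] by blast
  let ?n = translation_length
  let ?u = "walk_append w j (\<lambda>i. axis (k + int i))"
  have there: "reduced_walk ?u (j + ?n)"
    using reduced_walk_append[OF w(1) reduced_walk_axis] w(3) before[of "j - 1"] w(4) by auto
  have return: "reduced_walk (\<lambda>i. \<phi> g (w (j - i))) j"
    using reduced_walk_act[OF g_carrier reduced_walk_rev[OF w(1)]] w(3) axis_vertex by simp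
  have joint: "?u (j + ?n) = \<phi> g (w j)"
    using w(3) axis_shift translation_length_pos by (simp add: walk_append_def)
  have turn: "?u (j + ?n - 1) \<noteq> \<phi> g (w (j - 1))"
  proof
    assume eq: "?u (j + ?n - 1) = \<phi> g (w (j - 1))"
    have "?u (j + ?n - 1) = axis (k + int (?n - 1))"
      using w(3) translation_length_pos by (cases "?n = 1") (auto simp: walk_append_def)
    then have "\<phi> g (w (j - 1)) = axis (k + int (?n - 1))"
      using eq by simp
    moreover have "w (j - 1) \<in> VT"
      using w(1,4) walk_vertex[of w j "j - 1"] unfolding reduced_walk_def by simp
    ultimately show False
      using axis_preimage before[of "j - 1"] w(4) by auto
  qed
  have "reduced_walk (walk_append ?u (j + ?n) (\<lambda>i. \<phi> g (w (j - i)))) (j + ?n + j)"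
    using reduced_walk_append[OF there return] joint turn by simp
  from distance_reduced_walk[OF this] have "displacement y = j + ?n + j"
    using w(2,4) y unfolding displacement_def by (simp add: walk_append_def)
  then show ?thesis using w(4) by simp
qed

lemma commuting_translates_axis:
  assumes h: "h \<in> carrier G" and commute: "h \<otimes> g = g \<otimes> h"
  obtains t where "\<And>k. \<phi> h (axis k) = axis (k + t)"
proof -
  have swap: "\<phi> g (\<phi> h x) = \<phi> h (\<phi> g x)" if "x \<in> VT" for x
    using act_mult[OF g_carrier h that] act_mult[OF h g_carrier that] commute by simp
  have on_axis: "\<phi> h (axis k) \<in> range axis" for k
  proof (rule ccontr)
    assume off: "\<phi> h (axis k) \<notin> range axis"
    have "displacement (\<phi> h (axis k)) = distance (\<phi> h (axis k)) (\<phi> h (\<phi> g (axis k)))"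
      unfolding displacement_def using swap axis_vertex by simp
    also have "\<dots> = translation_length"
      using distance_act[OF h axis_vertex act_vertex[OF g_carrier axis_vertex]] displacement_axis
      unfolding displacement_def by simp
    finally show False
      using displacement_off_axis[OF act_vertex[OF h axis_vertex] off] by simp
  qed
  define s where "s k = inv_into UNIV axis (\<phi> h (axis k))" for k
  have s: "\<phi> h (axis k) = axis (s k)" for k
    unfolding s_def using on_axis by (simp add: f_inv_into_f)
  have step: "\<bar>s (k + 1) - s k\<bar> = 1" for k
    using axis_adj_index[of "s k" "s (k + 1)"] act_adj[OF h axis_adj[of k]]
    by (simp add: s abs_minus_commute)
  have no_return: "s (k + 2) \<noteq> s k" for k
  proof
    assume "s (k + 2) = s k"
    then have "axis (k + 2) = axis k"
      using s act_inj[OF h axis_vertex axis_vertex] by metis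
    then show False using axis_no_backtrack by metis
  qed
  have "axis (s (0 + int translation_length)) = \<phi> g (\<phi> h (axis 0))"
    using s[symmetric] axis_shift[of 0] swap[OF axis_vertex] by simp
  then have period: "s (int translation_length) = s 0 + int translation_length"
    using s axis_shift[of "s 0"] axis_inj by simp
  have "s k = s 0 + k" for k
    using unit_step_int_map_is_shift[of s _ k, OF step no_return period] translation_length_pos by simp
  then show ?thesis using that s by (metis add.commute)
qed

definition translates_axis :: "'g \<Rightarrow> int \<Rightarrow> bool" where
  "translates_axis h t \<longleftrightarrow> h \<in> carrier G \<and> (\<forall>k. \<phi> h (axis k) = axis (k + t))"

lemma translates_axis_mult:
  assumes "translates_axis h t" "translates_axis h' t'"
  shows "translates_axis (h \<otimes> h') (t + t')"
  using assms act_mult axis_vertex monoid.m_closed[OF group.is_monoid[OF group]]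
  unfolding translates_axis_def by (simp add: ac_simps)

lemma translates_axis_one: "translates_axis \<one> 0"
  unfolding translates_axis_def using act_one axis_vertex group.is_monoid[OF group] by simp

lemma translates_axis_inv:
  assumes "translates_axis h t"
  shows "translates_axis (inv h) (- t)"
proof -
  have h: "h \<in> carrier G" using assms unfolding translates_axis_def by blast
  have "\<phi> (inv h) (axis k) = axis (k - t)" for k
  proof -
    have "\<phi> (inv h) (axis k) = \<phi> (inv h) (\<phi> h (axis (k - t)))"
      using assms unfolding translates_axis_def by simp
    also have "\<dots> = axis (k - t)"
      using act_mult[OF group.inv_closed[OF group h] h axis_vertex] group.l_inv[OF group h]
        act_one axis_vertex by simp
    finally show ?thesis .
  qed
  then show ?thesis
    unfolding translates_axis_def using group.inv_closed[OF group h] by simp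
qed

lemma translates_axis_nat_pow: "translates_axis h t \<Longrightarrow> translates_axis (h [^] (n::nat)) (int n * t)"
proof (induction n)
  case 0
  then show ?case using translates_axis_one by simp
next
  case (Suc n)
  then have "translates_axis (h [^] n \<otimes> h) (int n * t + t)"
    using translates_axis_mult by blast
  then show ?case by (simp add: distrib_right add.commute)
qed

lemma translates_axis_int_pow:
  assumes "translates_axis h t"
  shows "translates_axis (h [^] (z::int)) (z * t)"
proof (cases "z < 0")
  case True
  then have "h [^] z = inv (h [^] nat (- z))"
    by (simp add: int_pow_def2 del: pow_nat)
  then show ?thesis
    using translates_axis_inv[OF translates_axis_nat_pow[OF assms, of "nat (- z)"]] True
    by (simp del: pow_nat)
next
  case False
  then show ?thesis
    using translates_axis_nat_pow[OF assms, of "nat z"] by (simp add: int_pow_def2 del: pow_nat)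
qed

text \<open>If h commutes with g it translates the axis by some t, while g translates it by
  translation_length; so h^translation_length g^-t fixes the axis pointwise.\<close>

lemma commuting_power_stabilizes_axis_edge:
  assumes "h \<in> carrier G" "h \<otimes> g = g \<otimes> h"
  shows "\<exists>t::int. h [^] int translation_length \<otimes> g [^] (- t) \<in> edge_stab G \<phi> (axis 0) (axis 1)"
proof -
  obtain t where "translates_axis h t"
    using commuting_translates_axis[OF assms] assms(1) unfolding translates_axis_def by blast
  moreover have "translates_axis g (int translation_length)"
    unfolding translates_axis_def using g_carrier axis_shift by simp
  ultimately have "translates_axis (h [^] int translation_length \<otimes> g [^] (- t))
      (int translation_length * t + (- t) * int translation_length)"
    using translates_axis_mult translates_axis_int_pow by blast
  then have "translates_axis (h [^] int translation_length \<otimes> g [^] (- t)) 0"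
    by simp
  then have "h [^] int translation_length \<otimes> g [^] (- t) \<in> edge_stab G \<phi> (axis 0) (axis 1)"
    unfolding translates_axis_def edge_stab_def by simp
  then show ?thesis ..
qed

end

section \<open>Right-angled Artin groups\<close>

lemma raag_rel_context:
  "raag_rel E u u' \<Longrightarrow> raag_rel E (xs @ u @ ys) (xs @ u' @ ys)"
proof (induction rule: raag_rel.induct)
  case (cancel xs' a b ys')
  then show ?case using raag_rel.cancel[of E "xs @ xs'" a b "ys' @ ys"] by simp
next
  case (comm a c xs' b d ys')
  then show ?case using raag_rel.comm[of E a c "xs @ xs'" b d "ys' @ ys"] by simp
qed (auto intro: raag_rel.intros)

lemma raag_rel_append:
  "raag_rel E u u' \<Longrightarrow> raag_rel E w w' \<Longrightarrow> raag_rel E (u @ w) (u' @ w')"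
  using raag_rel_context[of E u u' "[]" w] raag_rel_context[of E w w' u' "[]"] raag_rel.trans
  by fastforce

lemma raag_class_eq: "raag_rel E u w \<Longrightarrow> raag_class E u = raag_class E w"
  unfolding raag_class_def using raag_rel.trans raag_rel.sym by blast

lemma raag_rel_some_class: "raag_rel E u (SOME x. x \<in> raag_class E u)"
  using someI[of "\<lambda>x. x \<in> raag_class E u" u] raag_rel.refl unfolding raag_class_def by auto

lemma raag_mult_class:
  "raag_class E u \<otimes>\<^bsub>RAAG E\<^esub> raag_class E w = raag_class E (u @ w)"
  unfolding RAAG_def raag_mult_def
  using raag_class_eq[OF raag_rel_append[OF raag_rel_some_class raag_rel_some_class], symmetric]
  by simp

definition raag_word_inv :: "('v \<times> bool) list \<Rightarrow> ('v \<times> bool) list" where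
  "raag_word_inv w = rev (map (\<lambda>(x, b). (x, \<not> b)) w)"

lemma raag_rel_word_inv: "raag_rel E (w @ raag_word_inv w) []"
proof (induction w)
  case Nil
  then show ?case by (simp add: raag_word_inv_def raag_rel.refl)
next
  case (Cons xb w)
  obtain x b where xb: "xb = (x, b)" by fastforce
  have "raag_rel E ([(x, b)] @ (w @ raag_word_inv w) @ [(x, \<not> b)]) ([(x, b)] @ [] @ [(x, \<not> b)])"
    using Cons.IH by (rule raag_rel_context)
  moreover have "raag_rel E ([] @ [(x, b), (x, \<not> b)] @ []) []"
    using raag_rel.cancel[of E "[]" x b "[]"] by simp
  ultimately show ?case
    using raag_rel.trans by (fastforce simp: xb raag_word_inv_def)
qed

lemma RAAG_l_inv_ex:
  assumes "x \<in> carrier (RAAG E)"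
  shows "\<exists>y \<in> carrier (RAAG E). y \<otimes>\<^bsub>RAAG E\<^esub> x = \<one>\<^bsub>RAAG E\<^esub>"
proof -
  obtain w where x: "x = raag_class E w" using assms unfolding RAAG_def by auto
  have "raag_word_inv (raag_word_inv w) = w"
    by (induction w) (auto simp: raag_word_inv_def)
  then have "raag_rel E (raag_word_inv w @ w) []"
    using raag_rel_word_inv[of E "raag_word_inv w"] by simp
  then have "raag_class E (raag_word_inv w) \<otimes>\<^bsub>RAAG E\<^esub> x = \<one>\<^bsub>RAAG E\<^esub>"
    unfolding x raag_mult_class by (simp add: raag_class_eq RAAG_def)
  then show ?thesis
    unfolding RAAG_def by auto
qed

lemma group_RAAG: "group (RAAG E)"
  by (rule groupI; (fact RAAG_l_inv_ex)?)
    (auto simp: RAAG_def raag_mult_class[unfolded RAAG_def, simplified])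

lemma raag_gen_carrier: "raag_gen E v \<in> carrier (RAAG E)"
  unfolding raag_gen_def RAAG_def by simp

lemma raag_gen_commute:
  "E u w \<Longrightarrow> raag_gen E u \<otimes>\<^bsub>RAAG E\<^esub> raag_gen E w = raag_gen E w \<otimes>\<^bsub>RAAG E\<^esub> raag_gen E u"
  unfolding raag_gen_def raag_mult_class
  using raag_rel.comm[of E u w "[]" True True "[]"] by (simp add: raag_class_eq)

definition word_exp_sum :: "'v \<Rightarrow> ('v \<times> bool) list \<Rightarrow> int" where
  "word_exp_sum a w = (\<Sum>(x, b) \<leftarrow> w. if x = a then (if b then 1 else -1) else 0)"

definition raag_exp_sum :: "'v \<Rightarrow> ('v \<times> bool) list set \<Rightarrow> int" where
  "raag_exp_sum a x = word_exp_sum a (SOME w. w \<in> x)"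

lemma word_exp_sum_rel: "raag_rel E u w \<Longrightarrow> word_exp_sum a u = word_exp_sum a w"
  by (induction rule: raag_rel.induct) (auto simp: word_exp_sum_def)

lemma raag_exp_sum_class: "raag_exp_sum a (raag_class E w) = word_exp_sum a w"
  unfolding raag_exp_sum_def using word_exp_sum_rel[OF raag_rel_some_class] by metis

lemma raag_exp_sum_hom: "raag_exp_sum a \<in> hom (RAAG E) integer_group"
  by (rule homI) (auto simp: RAAG_def raag_mult_class[unfolded RAAG_def, simplified]
      raag_exp_sum_class word_exp_sum_def)

lemma raag_exp_sum_int_pow:
  "x \<in> carrier (RAAG E) \<Longrightarrow> raag_exp_sum a (x [^]\<^bsub>RAAG E\<^esub> (k::int)) = k * raag_exp_sum a x"
  using hom_int_pow[OF raag_exp_sum_hom _ group_RAAG group_integer_group] by simp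

lemma raag_exp_sum_gen: "raag_exp_sum a (raag_gen E v) = (if v = a then 1 else 0)"
  unfolding raag_gen_def raag_exp_sum_class by (simp add: word_exp_sum_def)

lemma raag_gen_powers_not_in_cyclic_subgroup:
  fixes n s t i j :: int
  assumes "a \<noteq> b" "v \<noteq> a" "v \<noteq> b" "n \<noteq> 0" "c \<in> carrier (RAAG E)"
    and a: "raag_gen E a [^]\<^bsub>RAAG E\<^esub> n \<otimes>\<^bsub>RAAG E\<^esub> raag_gen E v [^]\<^bsub>RAAG E\<^esub> s
      = c [^]\<^bsub>RAAG E\<^esub> i"
    and b: "raag_gen E b [^]\<^bsub>RAAG E\<^esub> n \<otimes>\<^bsub>RAAG E\<^esub> raag_gen E v [^]\<^bsub>RAAG E\<^esub> t
      = c [^]\<^bsub>RAAG E\<^esub> j"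
  shows False
proof -
  have sum: "raag_exp_sum u (raag_gen E w [^]\<^bsub>RAAG E\<^esub> n
      \<otimes>\<^bsub>RAAG E\<^esub> raag_gen E v [^]\<^bsub>RAAG E\<^esub> (r::int))
    = n * raag_exp_sum u (raag_gen E w) + r * raag_exp_sum u (raag_gen E v)" for u w r
    using hom_mult[OF raag_exp_sum_hom, of "raag_gen E w [^]\<^bsub>RAAG E\<^esub> n" E
        "raag_gen E v [^]\<^bsub>RAAG E\<^esub> r" u]
    by (simp add: raag_exp_sum_int_pow raag_gen_carrier group.int_pow_closed[OF group_RAAG])
  have "i * raag_exp_sum a c = n" "i * raag_exp_sum b c = 0" "j * raag_exp_sum b c = n"
    using sum[of a a s] sum[of b a s] sum[of b b t] a b assms(1-3)
    by (simp_all add: raag_exp_sum_int_pow[OF \<open>c \<in> carrier (RAAG E)\<close>] raag_exp_sum_gen)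
  then show False
    using \<open>n \<noteq> 0\<close> by auto
qed

lemma valence_two_neighbours:
  assumes "valence E v > 1"
  obtains a b where "E v a" "E v b" "a \<noteq> b"
proof -
  have "finite {w. E v w}" using assms card.infinite unfolding valence_def by fastforce
  then show ?thesis
    using assms that card_le_Suc0_iff_eq[of "{w. E v w}"] unfolding valence_def by auto
qed

theorem corollary3p4:
  fixes E :: "'v::finite \<Rightarrow> 'v \<Rightarrow> bool"
    and VT :: "'t set" and ET :: "'t \<Rightarrow> 't \<Rightarrow> bool"
    and \<phi> :: "('v \<times> bool) list set \<Rightarrow> 't \<Rightarrow> 't"
    and v :: 'v
  assumes "simplicial_graph E"
    and "graph_connected E"
    and "3 \<le> card (UNIV :: 'v set)"
    and "is_tree VT ET"
    and "tree_action (RAAG E) VT ET \<phi>"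
    and "\<forall>x y. ET x y \<longrightarrow> infinite_cyclic (RAAG E) (edge_stab (RAAG E) \<phi> x y)"
    and "valence E v > 1"
  shows "elliptic VT \<phi> (raag_gen E v)"
proof (rule ccontr)
  assume "\<not> elliptic VT \<phi> (raag_gen E v)"
  then have "\<forall>x\<in>VT. \<phi> (raag_gen E v) x \<noteq> x"
    unfolding elliptic_def by blast
  then interpret hyperbolic_element VT ET "RAAG E" \<phi> "raag_gen E v"
    using assms(4,5) raag_gen_carrier by unfold_locales
  obtain a b where ab: "E v a" "E v b" "a \<noteq> b"
    using assms(7) by (rule valence_two_neighbours)
  then have "v \<noteq> a" "v \<noteq> b"
    using assms(1) unfolding simplicial_graph_def by auto
  from commuting_power_stabilizes_axis_edge[OF raag_gen_carrier
    raag_gen_commute[of E v a, OF ab(1), symmetric]]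
  obtain s :: int where
    "raag_gen E a [^]\<^bsub>RAAG E\<^esub> int translation_length
      \<otimes>\<^bsub>RAAG E\<^esub> raag_gen E v [^]\<^bsub>RAAG E\<^esub> (- s) \<in> edge_stab (RAAG E) \<phi> (axis 0) (axis 1)" ..
  moreover from commuting_power_stabilizes_axis_edge[OF raag_gen_carrier
    raag_gen_commute[of E v b, OF ab(2), symmetric]]
  obtain t :: int where
    "raag_gen E b [^]\<^bsub>RAAG E\<^esub> int translation_length
      \<otimes>\<^bsub>RAAG E\<^esub> raag_gen E v [^]\<^bsub>RAAG E\<^esub> (- t) \<in> edge_stab (RAAG E) \<phi> (axis 0) (axis 1)" ..
  moreover have "infinite_cyclic (RAAG E) (edge_stab (RAAG E) \<phi> (axis 0) (axis 1))"
    using assms(6) axis_adj[of 0] by simp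
  then obtain c where "c \<in> carrier (RAAG E)"
    "edge_stab (RAAG E) \<phi> (axis 0) (axis 1) = {c [^]\<^bsub>RAAG E\<^esub> (k::int) | k. True}"
    unfolding infinite_cyclic_def by blast
  ultimately show False
    using raag_gen_powers_not_in_cyclic_subgroup[of a b v "int translation_length" c E]
      ab(3) \<open>v \<noteq> a\<close> \<open>v \<noteq> b\<close> translation_length_pos by auto
qed

end
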